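(* Let $\mu\in\mathsf{Form}_{\mathcal L}$ and let $\mathcal M=(S,E,\mathrm{Val})$ be a playable $Ł_n$-model. If $\mathcal M^*=(|S|,E^*,\mathrm{Val}^* )$ is an intermediate $\mathrm{Cl}(\mu)$-filtration of $\mathcal M$, then for every $u\in S$ the restriction $E^*(|u|)^\sharp$ of $E^*(|u|)$ to $\mathcal P N\times Ł_1^{|S|}$ is a playable Boolean effectivity function.
   Context: $Ł_n=\{0,\frac1n,\dots,1\}$ with $\neg x=1-x$, $x\oplus y=\min(x+y,1)$, $x\odot y=\max(x+y-1,0)$, $x\to y=\min(1,1-x+y)$, $\wedge=\min$, $\vee=\max$, applied pointwise to functions; $Ł_1^X=\{0,1\}^X$. $N$ is a finite set of players, $|N|\ge2$, $\overline C=N\setminus C$. An $Ł_n$-valued effectivity function on a set $X$ is a map $E:\mathcal P N\times Ł_n^X\to Ł_n$ (Boolean when $n=1$). It is: outcome monotonic if $f\ge g$ implies $E(C,f)\ge E(C,g)$; $N$-maximal if $\neg E(\varnothing,\neg f)\le E(N,f)$; superadditive if $E(C_1,f)\wedge E(C_2,g)\le E(C_1\cup C_2,f\wedge g)$ whenever $C_1\cap C_2=\varnothing$; homogeneous if $E(C,f\oplus f)=E(C,f)\oplus E(C,f)$ and $E(C,f\odot f)=E(C,f)\odot E(C,f)$; has liveness if $E(C,1)=1$ for all $C$; has safety if $E(C,0)=0$ for all $C$. Playable: all six properties. Formulas of $\mathcal L$: $\phi::=1\mid p\mid\phi\to\phi\mid\neg\phi\mid[C]\phi$ ($p$ in a countably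 infinite set $\mathsf{Prop}$, $C\subseteq N$); $\mathsf{Form}_{\mathcal L}$ is the set of formulas; abbreviations $0=\neg1$, $\phi\oplus\psi=\neg\phi\to\psi$, $\phi\odot\psi=\neg(\phi\to\neg\psi)$, $\phi\wedge\psi=\phi\odot(\phi\to\psi)$. $\mathrm{Cl}(\mu)$ is the closure of the set of subformulas of $\mu$ under $\neg$ and $\to$. An $Ł_n$-model $(S,E,\mathrm{Val})$: $S\ne\varnothing$, $E(u)$ an $Ł_n$-valued effectivity function on $S$ for each $u$, $\mathrm{Val}:S\times\mathsf{Prop}\to Ł_n$ extended by the Łukasiewicz operations and $\mathrm{Val}(u,[C]\phi)=E(u)(C,\mathrm{Val}(-,\phi))$; it is playable if every $E(u)$ is playable. For $\Gamma$ a set of formulas closed under subformulas and $\phi\mapsto\phi\oplus\phi$, $\phi\mapsto\phi\odot\phi$: $u\equiv_\Gamma v$ iff $\mathrm{Val}(u,\phi)=\mathrm{Val}(v,\phi)$ for all $\phi\in\Gamma$; $|S|$ is the set of classes; $|\mathrm{Val}(-,\phi)|(|u|)=\mathrm{Val}(u,\phi)$. A $\Gamma$-filtration is an $Ł_n$-model $(|S|,E^*,\mathrm{Val}^* )$ with $\mathrm{Val}^*(|u|,p)=\mathrm{Val}(u,p)$ for $p\in\Gamma$ and $E(u)(C,\mathrm{Val}(-,\phi))=E^*(|u|)(C,|\mathrm{Val}(-,\phi)|)$ for all $C$, $\phi\in\Gamma$. It is an intermediate $\Gamma$-filtration of a playable $\mathcal M$ if moreover, for every $u$, $f\in Ł_n^{|S|}$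 and proper coalition $C\ne N$, $E^*(|u|)(C,f)=\max\{E(u)(C,\mathrm{Val}(-,\phi))\mid\phi\in\Gamma,\ |\mathrm{Val}(-,\phi)|\le f\}$, and $E^*(|u|)(N,f)=\neg E^*(|u|)(\varnothing,\neg f)$. *)

theory Defs
  imports Complex_Main "HOL-Library.FuncSet"
begin

text \<open>The chain L_n = {0, 1/n, ..., 1} as a set of reals (n >= 1).
  Functions X -> L_n are represented extensionally (value undefined outside X).\<close>

definition luk :: "nat \<Rightarrow> real set" where
  "luk n = {real k / real n | k. k \<le> n}"

definition lfun :: "nat \<Rightarrow> 'x set \<Rightarrow> ('x \<Rightarrow> real) set" where
  "lfun n X = X \<rightarrow>\<^sub>E luk n"

definition lneg :: "'x set \<Rightarrow> ('x \<Rightarrow> real) \<Rightarrow> ('x \<Rightarrow> real)" where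
  "lneg X f = restrict (\<lambda>x. 1 - f x) X"

definition loplus :: "'x set \<Rightarrow> ('x \<Rightarrow> real) \<Rightarrow> ('x \<Rightarrow> real) \<Rightarrow> ('x \<Rightarrow> real)" where
  "loplus X f g = restrict (\<lambda>x. min (f x + g x) 1) X"

definition lodot :: "'x set \<Rightarrow> ('x \<Rightarrow> real) \<Rightarrow> ('x \<Rightarrow> real) \<Rightarrow> ('x \<Rightarrow> real)" where
  "lodot X f g = restrict (\<lambda>x. max (f x + g x - 1) 0) X"

definition lmin :: "'x set \<Rightarrow> ('x \<Rightarrow> real) \<Rightarrow> ('x \<Rightarrow> real) \<Rightarrow> ('x \<Rightarrow> real)" where
  "lmin X f g = restrict (\<lambda>x. min (f x) (g x)) X"

definition lconst :: "'x set \<Rightarrow> real \<Rightarrow> ('x \<Rightarrow> real)" where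
  "lconst X c = restrict (\<lambda>_. c) X"

definition vop :: "real \<Rightarrow> real \<Rightarrow> real" where
  "vop a b = min (a + b) 1"

definition vodot :: "real \<Rightarrow> real \<Rightarrow> real" where
  "vodot a b = max (a + b - 1) 0"

text \<open>Players: a finite type 'a, N = UNIV, coalitions = 'a set.
  An L_n-valued effectivity function on X: E :: 'a set => (X -> L_n) => L_n.\<close>

definition eff_fun :: "nat \<Rightarrow> 'x set \<Rightarrow> ('a set \<Rightarrow> ('x \<Rightarrow> real) \<Rightarrow> real) \<Rightarrow> bool" where
  "eff_fun n X E \<longleftrightarrow> (\<forall>C. \<forall>f\<in>lfun n X. E C f \<in> luk n)"

definition outcome_monotonic :: "nat \<Rightarrow> 'x set \<Rightarrow> ('a set \<Rightarrow> ('x \<Rightarrow> real) \<Rightarrow> real) \<Rightarrow> bool" where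
  "outcome_monotonic n X E \<longleftrightarrow>
     (\<forall>C. \<forall>f\<in>lfun n X. \<forall>g\<in>lfun n X. (\<forall>x\<in>X. g x \<le> f x) \<longrightarrow> E C g \<le> E C f)"

definition N_maximal :: "nat \<Rightarrow> 'x set \<Rightarrow> ('a set \<Rightarrow> ('x \<Rightarrow> real) \<Rightarrow> real) \<Rightarrow> bool" where
  "N_maximal n X E \<longleftrightarrow> (\<forall>f\<in>lfun n X. 1 - E {} (lneg X f) \<le> E UNIV f)"

definition superadditive :: "nat \<Rightarrow> 'x set \<Rightarrow> ('a set \<Rightarrow> ('x \<Rightarrow> real) \<Rightarrow> real) \<Rightarrow> bool" where
  "superadditive n X E \<longleftrightarrow>
     (\<forall>C1 C2. \<forall>f\<in>lfun n X. \<forall>g\<in>lfun n X. C1 \<inter> C2 = {} \<longrightarrow>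
        min (E C1 f) (E C2 g) \<le> E (C1 \<union> C2) (lmin X f g))"

definition homogeneous :: "nat \<Rightarrow> 'x set \<Rightarrow> ('a set \<Rightarrow> ('x \<Rightarrow> real) \<Rightarrow> real) \<Rightarrow> bool" where
  "homogeneous n X E \<longleftrightarrow>
     (\<forall>C. \<forall>f\<in>lfun n X. E C (loplus X f f) = vop (E C f) (E C f)
                      \<and> E C (lodot X f f) = vodot (E C f) (E C f))"

definition liveness :: "'x set \<Rightarrow> ('a set \<Rightarrow> ('x \<Rightarrow> real) \<Rightarrow> real) \<Rightarrow> bool" where
  "liveness X E \<longleftrightarrow> (\<forall>C. E C (lconst X 1) = 1)"

definition safety :: "'x set \<Rightarrow> ('a set \<Rightarrow> ('x \<Rightarrow> real) \<Rightarrow> real) \<Rightarrow> bool" where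
  "safety X E \<longleftrightarrow> (\<forall>C. E C (lconst X 0) = 0)"

text \<open>For n = 1 this is a playable
  Boolean effectivity function; since every clause only inspects arguments in
  lfun 1 X = {0,1}^X, "playable 1 X E" is exactly the statement that the
  restriction of E to P N x L_1^X is a playable Boolean effectivity function.\<close>

definition playable :: "nat \<Rightarrow> 'x set \<Rightarrow> ('a set \<Rightarrow> ('x \<Rightarrow> real) \<Rightarrow> real) \<Rightarrow> bool" where
  "playable n X E \<longleftrightarrow> eff_fun n X E \<and> outcome_monotonic n X E \<and> N_maximal n X E
     \<and> superadditive n X E \<and> homogeneous n X E \<and> liveness X E \<and> safety X E"

datatype 'a form = FOne | FVar nat | FImp "'a form" "'a form" | FNeg "'a form"
  | FBox "'a set" "'a form"

fun subformulas :: "'a form \<Rightarrow> 'a form set" where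
  "subformulas FOne = {FOne}"
| "subformulas (FVar p) = {FVar p}"
| "subformulas (FImp a b) = insert (FImp a b) (subformulas a \<union> subformulas b)"
| "subformulas (FNeg a) = insert (FNeg a) (subformulas a)"
| "subformulas (FBox C a) = insert (FBox C a) (subformulas a)"

inductive_set Cl :: "'a form \<Rightarrow> 'a form set" for \<mu> where
  sub: "\<phi> \<in> subformulas \<mu> \<Longrightarrow> \<phi> \<in> Cl \<mu>"
| neg: "\<phi> \<in> Cl \<mu> \<Longrightarrow> FNeg \<phi> \<in> Cl \<mu>"
| imp: "\<phi> \<in> Cl \<mu> \<Longrightarrow> \<psi> \<in> Cl \<mu> \<Longrightarrow> FImp \<phi> \<psi> \<in> Cl \<mu>"

fun eval :: "'s set \<Rightarrow> ('s \<Rightarrow> 'a set \<Rightarrow> ('s \<Rightarrow> real) \<Rightarrow> real) \<Rightarrow> ('s \<Rightarrow> nat \<Rightarrow> real)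
    \<Rightarrow> 's \<Rightarrow> 'a form \<Rightarrow> real" where
  "eval S E V u FOne = 1"
| "eval S E V u (FVar p) = V u p"
| "eval S E V u (FImp a b) = min 1 (1 - eval S E V u a + eval S E V u b)"
| "eval S E V u (FNeg a) = 1 - eval S E V u a"
| "eval S E V u (FBox C a) = E u C (restrict (\<lambda>v. eval S E V v a) S)"

definition is_model :: "nat \<Rightarrow> 's set \<Rightarrow> ('s \<Rightarrow> 'a set \<Rightarrow> ('s \<Rightarrow> real) \<Rightarrow> real)
    \<Rightarrow> ('s \<Rightarrow> nat \<Rightarrow> real) \<Rightarrow> bool" where
  "is_model n S E V \<longleftrightarrow> S \<noteq> {} \<and> (\<forall>u\<in>S. eff_fun n S (E u)) \<and> (\<forall>u\<in>S. \<forall>p. V u p \<in> luk n)"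

definition playable_model :: "nat \<Rightarrow> 's set \<Rightarrow> ('s \<Rightarrow> 'a set \<Rightarrow> ('s \<Rightarrow> real) \<Rightarrow> real)
    \<Rightarrow> ('s \<Rightarrow> nat \<Rightarrow> real) \<Rightarrow> bool" where
  "playable_model n S E V \<longleftrightarrow> is_model n S E V \<and> (\<forall>u\<in>S. playable n S (E u))"

definition cls :: "'a form set \<Rightarrow> 's set \<Rightarrow> ('s \<Rightarrow> 'a set \<Rightarrow> ('s \<Rightarrow> real) \<Rightarrow> real)
    \<Rightarrow> ('s \<Rightarrow> nat \<Rightarrow> real) \<Rightarrow> 's \<Rightarrow> 's set" where
  "cls \<Gamma> S E V u = {v \<in> S. \<forall>\<phi>\<in>\<Gamma>. eval S E V u \<phi> = eval S E V v \<phi>}"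

definition qstates :: "'a form set \<Rightarrow> 's set \<Rightarrow> ('s \<Rightarrow> 'a set \<Rightarrow> ('s \<Rightarrow> real) \<Rightarrow> real)
    \<Rightarrow> ('s \<Rightarrow> nat \<Rightarrow> real) \<Rightarrow> 's set set" where
  "qstates \<Gamma> S E V = cls \<Gamma> S E V ` S"

definition liftval :: "'a form set \<Rightarrow> 's set \<Rightarrow> ('s \<Rightarrow> 'a set \<Rightarrow> ('s \<Rightarrow> real) \<Rightarrow> real)
    \<Rightarrow> ('s \<Rightarrow> nat \<Rightarrow> real) \<Rightarrow> 'a form \<Rightarrow> ('s set \<Rightarrow> real)" where
  "liftval \<Gamma> S E V \<phi> = restrict (\<lambda>c. eval S E V (SOME u. u \<in> c) \<phi>) (qstates \<Gamma> S E V)"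

definition filtration :: "nat \<Rightarrow> 'a form set \<Rightarrow> 's set \<Rightarrow> ('s \<Rightarrow> 'a set \<Rightarrow> ('s \<Rightarrow> real) \<Rightarrow> real)
    \<Rightarrow> ('s \<Rightarrow> nat \<Rightarrow> real)
    \<Rightarrow> ('s set \<Rightarrow> 'a set \<Rightarrow> ('s set \<Rightarrow> real) \<Rightarrow> real) \<Rightarrow> ('s set \<Rightarrow> nat \<Rightarrow> real) \<Rightarrow> bool" where
  "filtration n \<Gamma> S E V Es Vs \<longleftrightarrow>
     is_model n (qstates \<Gamma> S E V) Es Vs
   \<and> (\<forall>u\<in>S. \<forall>p. FVar p \<in> \<Gamma> \<longrightarrow> Vs (cls \<Gamma> S E V u) p = V u p)
   \<and> (\<forall>u\<in>S. \<forall>C. \<forall>\<phi>\<in>\<Gamma>.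
        E u C (restrict (\<lambda>v. eval S E V v \<phi>) S) = Es (cls \<Gamma> S E V u) C (liftval \<Gamma> S E V \<phi>))"

definition intermediate_filtration :: "nat \<Rightarrow> 'a form set \<Rightarrow> 's set
    \<Rightarrow> ('s \<Rightarrow> 'a set \<Rightarrow> ('s \<Rightarrow> real) \<Rightarrow> real) \<Rightarrow> ('s \<Rightarrow> nat \<Rightarrow> real)
    \<Rightarrow> ('s set \<Rightarrow> 'a set \<Rightarrow> ('s set \<Rightarrow> real) \<Rightarrow> real) \<Rightarrow> ('s set \<Rightarrow> nat \<Rightarrow> real) \<Rightarrow> bool" where
  "intermediate_filtration n \<Gamma> S E V Es Vs \<longleftrightarrow>
     playable_model n S E V
   \<and> filtration n \<Gamma> S E V Es Vs
   \<and> (\<forall>u\<in>S. \<forall>f\<in>lfun n (qstates \<Gamma> S E V). \<forall>C. C \<noteq> UNIV \<longrightarrow>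
        Es (cls \<Gamma> S E V u) C f =
          Max {E u C (restrict (\<lambda>v. eval S E V v \<phi>) S) | \<phi>.
                 \<phi> \<in> \<Gamma> \<and> (\<forall>c\<in>qstates \<Gamma> S E V. liftval \<Gamma> S E V \<phi> c \<le> f c)})
   \<and> (\<forall>u\<in>S. \<forall>f\<in>lfun n (qstates \<Gamma> S E V).
        Es (cls \<Gamma> S E V u) UNIV f = 1 - Es (cls \<Gamma> S E V u) {} (lneg (qstates \<Gamma> S E V) f))"

end

theory Submission
  imports Defs
begin

text \<open>
  For a proper coalition C and a Boolean f, the value E*(|u|)(C,f) is the largest value
  E(u)(C,Val(-,\<phi>)) over the formulas \<phi> of the closure lying below f. It is Boolean:
  a positive value is at least 1/n, and since f is Boolean, replacing \<phi> by
  \<phi> \<oplus> \<phi> n times keeps it below f while, by homogeneity of E(u), pushing the value to 1.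
  Every further property of the restriction is then inherited from E(u) by combining the
  witnessing formulas inside the closure (using conjunctions \<phi> \<and> \<psi> for superadditivity),
  and transferred to the grand coalition through E*(|u|)(N,f) = \<not>E*(|u|)(\<emptyset>,\<not>f).
\<close>

lemma luk_bounds: "n \<ge> 1 \<Longrightarrow> x \<in> luk n \<Longrightarrow> 0 \<le> x \<and> x \<le> 1"
  by (auto simp: luk_def)

lemma finite_luk: "finite (luk n)"
proof -
  have "luk n = (\<lambda>k. real k / real n) ` {..n}" unfolding luk_def by auto
  thus ?thesis by simp
qed

lemma zero_in_luk: "0 \<in> luk n"
  unfolding luk_def by force

lemma one_in_luk: "n \<ge> 1 \<Longrightarrow> 1 \<in> luk n"
  unfolding luk_def by (rule CollectI, rule exI[of _ n]) simp

lemma luk_1: "luk (Suc 0) = {0, 1}"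
  unfolding luk_def by (auto simp: le_Suc_eq)

lemma one_minus_in_luk:
  assumes "n \<ge> 1" "x \<in> luk n"
  shows "1 - x \<in> luk n"
proof -
  obtain k where k: "k \<le> n" "x = real k / real n" using assms by (auto simp: luk_def)
  have "1 - x = real (n - k) / real n" using k assms by (simp add: field_simps)
  thus ?thesis unfolding luk_def by auto
qed

lemma implication_in_luk:
  assumes "n \<ge> 1" "x \<in> luk n" "y \<in> luk n"
  shows "min 1 (1 - x + y) \<in> luk n"
proof -
  obtain k where k: "k \<le> n" "x = real k / real n" using assms by (auto simp: luk_def)
  obtain j where j: "j \<le> n" "y = real j / real n" using assms by (auto simp: luk_def)
  show ?thesis
  proof (cases "k \<le> j")
    case True
    hence "x \<le> y" using k j by (simp add: divide_right_mono)
    thus ?thesis using one_in_luk assms(1) by simp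
  next
    case False
    hence "y < x" using k j assms by (simp add: divide_strict_right_mono)
    hence "min 1 (1 - x + y) = 1 - x + y" by simp
    also have "\<dots> = real (n - k + j) / real n"
      using k j assms False by (simp add: field_simps)
    finally have "min 1 (1 - x + y) = real (n - k + j) / real n" .
    moreover have "n - k + j \<le> n" using False k by simp
    ultimately show ?thesis unfolding luk_def by blast
  qed
qed

lemma luk_pos_saturates:
  assumes "n \<ge> 1" "x \<in> luk n" "x > 0"
  shows "1 \<le> 2 ^ n * x"
proof -
  obtain k where k: "k \<le> n" "x = real k / real n" using assms by (auto simp: luk_def)
  have "k \<ge> 1" using k assms(3) by (cases k) auto
  have "real n \<le> 2 ^ n"
    using less_exp[of n] by (metis less_imp_le of_nat_le_iff of_nat_numeral of_nat_power)
  also have "\<dots> \<le> 2 ^ n * real k" using \<open>k \<ge> 1\<close> by simp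
  finally have "real n \<le> 2 ^ n * real k" .
  thus ?thesis using k assms(1) by (simp add: le_divide_eq)
qed

lemma lfun_1_subset: "n \<ge> 1 \<Longrightarrow> lfun 1 X \<subseteq> lfun n X"
  using zero_in_luk[of n] one_in_luk[of n] by (auto simp: lfun_def luk_1 PiE_def Pi_def)

lemma lfun_1_values: "f \<in> lfun 1 X \<Longrightarrow> x \<in> X \<Longrightarrow> f x = 0 \<or> f x = 1"
  by (auto simp: lfun_def luk_1)

lemma lneg_lfun_1: "f \<in> lfun 1 X \<Longrightarrow> lneg X f \<in> lfun 1 X"
  by (auto simp: lfun_def luk_1 lneg_def)

lemma lmin_lfun_1: "f \<in> lfun 1 X \<Longrightarrow> g \<in> lfun 1 X \<Longrightarrow> lmin X f g \<in> lfun 1 X"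
  by (auto simp: lfun_def luk_1 lmin_def PiE_def Pi_def min_def)

lemma lconst_lfun_1: "lconst X 0 \<in> lfun 1 X" "lconst X 1 \<in> lfun 1 X"
  by (auto simp: lfun_def luk_1 lconst_def)

lemma loplus_idem_lfun_1: "f \<in> lfun 1 X \<Longrightarrow> loplus X f f = f"
  by (rule ext) (auto simp: loplus_def lfun_def luk_1 PiE_def Pi_def extensional_def)

lemma lodot_idem_lfun_1: "f \<in> lfun 1 X \<Longrightarrow> lodot X f f = f"
  by (rule ext) (auto simp: lodot_def lfun_def luk_1 PiE_def Pi_def extensional_def)

lemma lmin_commute: "lmin X f g = lmin X g f"
  by (simp add: lmin_def min.commute)

text \<open>The abbreviations \<phi> \<oplus> \<phi> and \<phi> \<and> \<psi> of the language, written in its primitives.\<close>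

definition fdouble :: "'a form \<Rightarrow> 'a form" where
  "fdouble \<phi> = FImp (FNeg \<phi>) \<phi>"

definition fwedge :: "'a form \<Rightarrow> 'a form \<Rightarrow> 'a form" where
  "fwedge \<phi> \<psi> = FNeg (FImp \<phi> (FNeg (FImp \<phi> \<psi>)))"

lemma eval_in_luk:
  assumes "n \<ge> 1" "is_model n S E V" "w \<in> S"
  shows "eval S E V w \<phi> \<in> luk n"
  using assms(3)
proof (induction \<phi> arbitrary: w)
  case (FBox C a)
  have "restrict (\<lambda>v. eval S E V v a) S \<in> lfun n S" using FBox.IH by (auto simp: lfun_def)
  then show ?case using assms(2) FBox.prems by (auto simp: is_model_def eff_fun_def)
qed (use assms one_in_luk implication_in_luk one_minus_in_luk in \<open>auto simp: is_model_def\<close>)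

lemma eval_fdouble: "eval S E V w (fdouble \<phi>) = min (eval S E V w \<phi> + eval S E V w \<phi>) 1"
  by (simp add: fdouble_def min.commute)

lemma double_saturate_step:
  "0 \<le> (a::real) \<Longrightarrow> min (min (2^k*a) 1 + min (2^k*a) 1) 1 = min (2^Suc k * a) 1"
  by (auto simp: min_def)

lemma eval_fdouble_iterate:
  assumes "0 \<le> eval S E V w \<phi>" "eval S E V w \<phi> \<le> 1"
  shows "eval S E V w ((fdouble ^^ k) \<phi>) = min (2^k * eval S E V w \<phi>) 1"
  by (induction k) (use assms double_saturate_step in \<open>simp_all add: eval_fdouble\<close>)

lemma eval_fwedge:
  assumes "0 \<le> eval S E V w \<phi>" "0 \<le> eval S E V w \<psi>"
  shows "eval S E V w (fwedge \<phi> \<psi>) = min (eval S E V w \<phi>) (eval S E V w \<psi>)"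
  using assms by (auto simp: fwedge_def min_def)

text \<open>
  Closure under \<not> and \<rightarrow> is all that is used of Cl(\<mu>): it provides the constant
  formulas, \<phi> \<oplus> \<phi> and \<phi> \<and> \<psi>.
\<close>

locale closed_intermediate_filtration =
  fixes n :: nat and \<Gamma> :: "'a form set" and S :: "'s set"
    and E :: "'s \<Rightarrow> 'a set \<Rightarrow> ('s \<Rightarrow> real) \<Rightarrow> real"
    and V :: "'s \<Rightarrow> nat \<Rightarrow> real"
    and Es :: "'s set \<Rightarrow> 'a set \<Rightarrow> ('s set \<Rightarrow> real) \<Rightarrow> real"
    and Vs :: "'s set \<Rightarrow> nat \<Rightarrow> real" and u :: 's
  assumes n_ge_1: "n \<ge> 1"
    and intermediate: "intermediate_filtration n \<Gamma> S E V Es Vs"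
    and u_in_S: "u \<in> S"
    and Gamma_nonempty: "\<Gamma> \<noteq> {}"
    and neg_closed: "\<And>\<phi>. \<phi> \<in> \<Gamma> \<Longrightarrow> FNeg \<phi> \<in> \<Gamma>"
    and imp_closed: "\<And>\<phi> \<psi>. \<phi> \<in> \<Gamma> \<Longrightarrow> \<psi> \<in> \<Gamma> \<Longrightarrow> FImp \<phi> \<psi> \<in> \<Gamma>"
begin

abbreviation Q where "Q \<equiv> qstates \<Gamma> S E V"
abbreviation cl where "cl v \<equiv> cls \<Gamma> S E V v"
abbreviation ev where "ev w \<phi> \<equiv> eval S E V w \<phi>"
abbreviation val where "val \<phi> \<equiv> restrict (\<lambda>v. eval S E V v \<phi>) S"
abbreviation Eu where "Eu \<equiv> Es (cl u)"

text \<open>The paper's |Val(-,\<phi>)| \<le> f, read off at representatives of the classes.\<close>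

definition below :: "'a form \<Rightarrow> ('s set \<Rightarrow> real) \<Rightarrow> bool" where
  "below \<phi> f \<longleftrightarrow> (\<forall>v\<in>S. ev v \<phi> \<le> f (cl v))"

definition candidates :: "'a set \<Rightarrow> ('s set \<Rightarrow> real) \<Rightarrow> real set" where
  "candidates C f = {E u C (val \<phi>) | \<phi>. \<phi> \<in> \<Gamma> \<and> below \<phi> f}"

lemma playable_E_u: "playable n S (E u)"
  using intermediate u_in_S by (simp add: intermediate_filtration_def playable_model_def)

lemma eval_bounds: "w \<in> S \<Longrightarrow> 0 \<le> ev w \<phi> \<and> ev w \<phi> \<le> 1"
  using intermediate eval_in_luk[OF n_ge_1] luk_bounds[OF n_ge_1]
  by (meson intermediate_filtration_def playable_model_def)

lemma val_lfun: "val \<phi> \<in> lfun n S"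
  using intermediate eval_in_luk[OF n_ge_1]
  by (auto simp: lfun_def intermediate_filtration_def playable_model_def)

lemma E_u_val_in_luk: "E u C (val \<phi>) \<in> luk n"
  using playable_E_u val_lfun by (auto simp: playable_def eff_fun_def)

lemma E_u_val_bounds: "0 \<le> E u C (val \<phi>) \<and> E u C (val \<phi>) \<le> 1"
  using E_u_val_in_luk luk_bounds n_ge_1 by blast

lemma cl_in_Q: "v \<in> S \<Longrightarrow> cl v \<in> Q"
  by (simp add: qstates_def)

lemma liftval_cl: assumes "v \<in> S" "\<phi> \<in> \<Gamma>" shows "liftval \<Gamma> S E V \<phi> (cl v) = ev v \<phi>"
proof -
  have "v \<in> cl v" using assms by (simp add: cls_def)
  hence "(SOME w. w \<in> cl v) \<in> cl v" by (rule someI)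
  hence "ev v \<phi> = ev (SOME w. w \<in> cl v) \<phi>" using assms by (simp add: cls_def)
  thus ?thesis using cl_in_Q[OF assms(1)] by (simp add: liftval_def)
qed

lemma Es_proper_eq_Max:
  assumes "C \<noteq> UNIV" "f \<in> lfun 1 Q"
  shows "Eu C f = Max (candidates C f)"
proof -
  have "\<phi> \<in> \<Gamma> \<Longrightarrow> (\<forall>c\<in>Q. liftval \<Gamma> S E V \<phi> c \<le> f c) \<longleftrightarrow> below \<phi> f" for \<phi>
    by (auto simp: below_def qstates_def liftval_cl)
  hence "candidates C f = {E u C (val \<phi>) | \<phi>.
      \<phi> \<in> \<Gamma> \<and> (\<forall>c\<in>Q. liftval \<Gamma> S E V \<phi> c \<le> f c)}"
    unfolding candidates_def by blast
  moreover have "f \<in> lfun n Q" using assms(2) lfun_1_subset[OF n_ge_1] by blast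
  ultimately show ?thesis
    using intermediate u_in_S assms(1) unfolding intermediate_filtration_def by simp
qed

lemma Es_UNIV: "f \<in> lfun 1 Q \<Longrightarrow> Eu UNIV f = 1 - Eu {} (lneg Q f)"
  using intermediate u_in_S lfun_1_subset[OF n_ge_1]
  unfolding intermediate_filtration_def by blast

lemma finite_candidates: "finite (candidates C f)"
proof -
  have "candidates C f \<subseteq> luk n" unfolding candidates_def using E_u_val_in_luk by auto
  thus ?thesis using finite_luk finite_subset by blast
qed

lemma constant_formulas:
  obtains \<phi>1 \<phi>0 where "\<phi>1 \<in> \<Gamma>" "\<And>w. ev w \<phi>1 = 1" "\<phi>0 \<in> \<Gamma>" "\<And>w. ev w \<phi>0 = 0"
proof -
  obtain \<phi> where "\<phi> \<in> \<Gamma>" using Gamma_nonempty by blast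
  thus ?thesis using that[of "FImp \<phi> \<phi>" "FNeg (FImp \<phi> \<phi>)"] neg_closed imp_closed by simp
qed

lemma candidates_nonempty: "f \<in> lfun 1 Q \<Longrightarrow> candidates C f \<noteq> {}"
proof -
  assume f: "f \<in> lfun 1 Q"
  obtain \<phi>0 where "\<phi>0 \<in> \<Gamma>" "\<And>w. ev w \<phi>0 = 0" using constant_formulas by metis
  moreover have "below \<phi>0 f"
    using lfun_1_values[OF f] cl_in_Q \<open>\<And>w. ev w \<phi>0 = 0\<close> unfolding below_def by force
  ultimately show ?thesis unfolding candidates_def by blast
qed

lemma Es_proper_ge:
  assumes "C \<noteq> UNIV" "f \<in> lfun 1 Q" "\<phi> \<in> \<Gamma>" "below \<phi> f"
  shows "E u C (val \<phi>) \<le> Eu C f"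
proof -
  have "E u C (val \<phi>) \<in> candidates C f" unfolding candidates_def using assms by blast
  moreover have "Eu C f = Max (candidates C f)" using Es_proper_eq_Max assms(1,2) .
  ultimately show ?thesis using finite_candidates by simp
qed

lemma Es_proper_attained:
  assumes "C \<noteq> UNIV" "f \<in> lfun 1 Q"
  obtains \<phi> where "\<phi> \<in> \<Gamma>" "below \<phi> f" "Eu C f = E u C (val \<phi>)"
proof -
  have "Max (candidates C f) \<in> candidates C f"
    using finite_candidates candidates_nonempty[OF assms(2)] by (rule Max_in)
  then obtain \<phi> where "\<phi> \<in> \<Gamma>" "below \<phi> f" "Max (candidates C f) = E u C (val \<phi>)"
    unfolding candidates_def by blast
  moreover have "Eu C f = Max (candidates C f)" using Es_proper_eq_Max assms .
  ultimately show ?thesis using that by simp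
qed

lemma fdouble_iterate_in_Gamma: "\<phi> \<in> \<Gamma> \<Longrightarrow> (fdouble ^^ k) \<phi> \<in> \<Gamma>"
  by (induction k) (auto simp: fdouble_def neg_closed imp_closed)

lemma E_u_fdouble_iterate: "E u C (val ((fdouble ^^ k) \<phi>)) = min (2^k * E u C (val \<phi>)) 1"
proof (induction k)
  case 0
  then show ?case using E_u_val_bounds[of C \<phi>] by (metis funpow_0 min.absorb1 mult_1 power_0)
next
  case (Suc k)
  let ?\<psi> = "(fdouble ^^ k) \<phi>"
  have "val (fdouble ?\<psi>) = loplus S (val ?\<psi>) (val ?\<psi>)"
    unfolding loplus_def by (rule restrict_ext) (simp add: eval_fdouble)
  then have "E u C (val ((fdouble ^^ Suc k) \<phi>)) = vop (E u C (val ?\<psi>)) (E u C (val ?\<psi>))"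
    using playable_E_u val_lfun by (simp add: playable_def homogeneous_def)
  also have "\<dots> = min (min (2^k * E u C (val \<phi>)) 1 + min (2^k * E u C (val \<phi>)) 1) 1"
    unfolding vop_def Suc.IH ..
  also have "\<dots> = min (2^Suc k * E u C (val \<phi>)) 1"
    using double_saturate_step E_u_val_bounds by blast
  finally show ?case .
qed

lemma Es_proper_Boolean:
  assumes C: "C \<noteq> UNIV" and f: "f \<in> lfun 1 Q"
  shows "Eu C f = 0 \<or> Eu C f = 1"
proof (rule ccontr)
  assume not_Boolean: "\<not> (Eu C f = 0 \<or> Eu C f = 1)"
  obtain \<phi> where \<phi>: "\<phi> \<in> \<Gamma>" "below \<phi> f" "Eu C f = E u C (val \<phi>)"
    using Es_proper_attained[OF C f] .
  let ?\<psi> = "(fdouble ^^ n) \<phi>"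
  have "E u C (val \<phi>) > 0" using not_Boolean \<phi>(3) E_u_val_bounds[of C \<phi>] by auto
  hence "E u C (val ?\<psi>) = 1"
    using luk_pos_saturates[OF n_ge_1 E_u_val_in_luk] E_u_fdouble_iterate by simp
  moreover have "below ?\<psi> f" unfolding below_def
  proof
    fix v assume v: "v \<in> S"
    have "ev v \<phi> \<le> f (cl v)" using \<phi>(2) v by (simp add: below_def)
    thus "ev v ?\<psi> \<le> f (cl v)"
      using lfun_1_values[OF f cl_in_Q[OF v]] eval_bounds[OF v, of \<phi>]
        eval_fdouble_iterate[of S E V v \<phi> n] by auto
  qed
  ultimately have "1 \<le> Eu C f"
    using Es_proper_ge[OF C f fdouble_iterate_in_Gamma[OF \<phi>(1)]] by metis
  thus False using not_Boolean \<phi>(3) E_u_val_bounds[of C \<phi>] by simp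
qed

lemma Es_Boolean:
  assumes f: "f \<in> lfun 1 Q"
  shows "Eu C f = 0 \<or> Eu C f = 1"
proof (cases "C = UNIV")
  case True
  have "Eu {} (lneg Q f) = 0 \<or> Eu {} (lneg Q f) = 1"
    using Es_proper_Boolean lneg_lfun_1[OF f] by blast
  then show ?thesis using True Es_UNIV[OF f] by auto
qed (use Es_proper_Boolean f in blast)

lemma Es_proper_eq_1_iff:
  assumes C: "C \<noteq> UNIV" and f: "f \<in> lfun 1 Q"
  shows "Eu C f = 1 \<longleftrightarrow> (\<exists>\<phi>\<in>\<Gamma>. below \<phi> f \<and> E u C (val \<phi>) = 1)"
proof
  assume "Eu C f = 1"
  then show "\<exists>\<phi>\<in>\<Gamma>. below \<phi> f \<and> E u C (val \<phi>) = 1"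
    using Es_proper_attained[OF C f] by metis
next
  assume "\<exists>\<phi>\<in>\<Gamma>. below \<phi> f \<and> E u C (val \<phi>) = 1"
  then have "1 \<le> Eu C f" using Es_proper_ge[OF C f] by metis
  then show "Eu C f = 1" using Es_Boolean[OF f, of C] by auto
qed

lemma Es_UNIV_eq_1_iff:
  assumes f: "f \<in> lfun 1 Q"
  shows "Eu UNIV f = 1 \<longleftrightarrow> \<not> (\<exists>\<chi>\<in>\<Gamma>. below \<chi> (lneg Q f) \<and> E u {} (val \<chi>) = 1)"
proof -
  have "Eu UNIV f = 1 \<longleftrightarrow> Eu {} (lneg Q f) \<noteq> 1"
    using Es_UNIV[OF f] Es_Boolean[OF lneg_lfun_1[OF f], of "{}"] by auto
  also have "\<dots> \<longleftrightarrow> \<not> (\<exists>\<chi>\<in>\<Gamma>. below \<chi> (lneg Q f) \<and> E u {} (val \<chi>) = 1)"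
    using Es_proper_eq_1_iff[OF _ lneg_lfun_1[OF f]] by simp
  finally show ?thesis .
qed

lemma fwedge_in_Gamma: "\<phi> \<in> \<Gamma> \<Longrightarrow> \<psi> \<in> \<Gamma> \<Longrightarrow> fwedge \<phi> \<psi> \<in> \<Gamma>"
  by (simp add: fwedge_def neg_closed imp_closed)

lemma ev_fwedge: "v \<in> S \<Longrightarrow> ev v (fwedge \<phi> \<psi>) = min (ev v \<phi>) (ev v \<psi>)"
  by (simp add: eval_fwedge eval_bounds)

lemma E_u_superadditive_fwedge:
  assumes "C1 \<inter> C2 = {}"
  shows "min (E u C1 (val \<phi>)) (E u C2 (val \<psi>)) \<le> E u (C1 \<union> C2) (val (fwedge \<phi> \<psi>))"
proof -
  have "val (fwedge \<phi> \<psi>) = lmin S (val \<phi>) (val \<psi>)"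
    unfolding lmin_def by (rule restrict_ext) (simp add: ev_fwedge)
  thus ?thesis using playable_E_u val_lfun assms unfolding playable_def superadditive_def by simp
qed

lemma E_u_fwedge_one:
  assumes "C1 \<inter> C2 = {}" "E u C1 (val \<phi>) = 1" "E u C2 (val \<psi>) = 1"
  shows "E u (C1 \<union> C2) (val (fwedge \<phi> \<psi>)) = 1"
proof -
  have "1 \<le> E u (C1 \<union> C2) (val (fwedge \<phi> \<psi>))"
    using E_u_superadditive_fwedge[OF assms(1), of \<phi> \<psi>] assms(2,3) by simp
  thus ?thesis using E_u_val_bounds[of "C1 \<union> C2" "fwedge \<phi> \<psi>"] by linarith
qed

lemma Es_proper_mono:
  assumes "C \<noteq> UNIV" "f \<in> lfun 1 Q" "g \<in> lfun 1 Q" "\<forall>x\<in>Q. g x \<le> f x"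
  shows "Eu C g \<le> Eu C f"
proof -
  have "candidates C g \<subseteq> candidates C f"
    unfolding candidates_def below_def using assms(4) cl_in_Q by fastforce
  hence "Max (candidates C g) \<le> Max (candidates C f)"
    using candidates_nonempty[OF assms(3)] finite_candidates by (rule Max_mono)
  moreover have "Eu C g = Max (candidates C g)" "Eu C f = Max (candidates C f)"
    using Es_proper_eq_Max assms(1-3) by blast+
  ultimately show ?thesis by simp
qed

lemma Es_outcome_monotonic: "outcome_monotonic 1 Q Eu"
  unfolding outcome_monotonic_def
proof (intro allI ballI impI)
  fix C f g assume f: "f \<in> lfun 1 Q" and g: "g \<in> lfun 1 Q" and le: "\<forall>x\<in>Q. g x \<le> f x"
  show "Eu C g \<le> Eu C f"
  proof (cases "C = UNIV")
    case True
    have "Eu {} (lneg Q f) \<le> Eu {} (lneg Q g)"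
      using Es_proper_mono[OF _ lneg_lfun_1[OF g] lneg_lfun_1[OF f]] le by (simp add: lneg_def)
    then show ?thesis using True Es_UNIV f g by simp
  qed (use Es_proper_mono f g le in blast)
qed

lemma Es_homogeneous: "homogeneous 1 Q Eu"
  unfolding homogeneous_def
proof (intro allI ballI)
  fix C f assume f: "f \<in> lfun 1 Q"
  show "Eu C (loplus Q f f) = vop (Eu C f) (Eu C f) \<and> Eu C (lodot Q f f) = vodot (Eu C f) (Eu C f)"
    using Es_Boolean[OF f, of C] loplus_idem_lfun_1[OF f] lodot_idem_lfun_1[OF f]
    by (auto simp: vop_def vodot_def)
qed

lemma Es_proper_safety: "C \<noteq> UNIV \<Longrightarrow> Eu C (lconst Q 0) = 0"
proof (rule ccontr)
  assume C: "C \<noteq> UNIV" and "Eu C (lconst Q 0) \<noteq> 0"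
  then obtain \<phi> where \<phi>: "\<phi> \<in> \<Gamma>" "below \<phi> (lconst Q 0)" "E u C (val \<phi>) = 1"
    using Es_Boolean[OF lconst_lfun_1(1)] Es_proper_eq_1_iff[OF C lconst_lfun_1(1)] by metis
  have "val \<phi> = lconst S 0" unfolding lconst_def
  proof (rule restrict_ext)
    fix v assume v: "v \<in> S"
    show "ev v \<phi> = 0"
      using \<phi>(2) v cl_in_Q[OF v] eval_bounds[OF v, of \<phi>] by (force simp: below_def lconst_def)
  qed
  thus False using playable_E_u \<phi>(3) by (simp add: playable_def safety_def)
qed

lemma Es_proper_liveness: "C \<noteq> UNIV \<Longrightarrow> Eu C (lconst Q 1) = 1"
proof -
  assume C: "C \<noteq> UNIV"
  obtain \<phi>1 where \<phi>1: "\<phi>1 \<in> \<Gamma>" "\<And>w. ev w \<phi>1 = 1" using constant_formulas by metis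
  have "below \<phi>1 (lconst Q 1)" using cl_in_Q \<phi>1(2) by (simp add: below_def lconst_def)
  moreover have "E u C (val \<phi>1) = 1"
    using playable_E_u \<phi>1(2) by (simp add: playable_def liveness_def lconst_def)
  ultimately show ?thesis using Es_proper_eq_1_iff[OF C lconst_lfun_1(2)] \<phi>1(1) by blast
qed

lemma Es_liveness: "liveness Q Eu"
proof -
  have "lneg Q (lconst Q 1) = lconst Q 0"
    unfolding lneg_def lconst_def by (rule restrict_ext) simp
  thus ?thesis unfolding liveness_def
    using Es_UNIV[OF lconst_lfun_1(2)] Es_proper_safety[of "{}"] Es_proper_liveness
    by (metis diff_zero empty_not_UNIV)
qed

lemma Es_safety: "safety Q Eu"
proof -
  have "lneg Q (lconst Q 0) = lconst Q 1"
    unfolding lneg_def lconst_def by (rule restrict_ext) simp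
  thus ?thesis unfolding safety_def
    using Es_UNIV[OF lconst_lfun_1(1)] Es_proper_liveness[of "{}"] Es_proper_safety
    by (metis cancel_comm_monoid_add_class.diff_cancel empty_not_UNIV)
qed

lemma below_fwedge:
  "below \<phi> f \<Longrightarrow> below \<psi> g \<Longrightarrow> below (fwedge \<phi> \<psi>) (lmin Q f g)"
  using cl_in_Q by (fastforce simp: below_def ev_fwedge lmin_def)

lemma Es_superadditive_proper:
  assumes "C1 \<inter> C2 = {}" "C1 \<union> C2 \<noteq> UNIV" "f \<in> lfun 1 Q" "g \<in> lfun 1 Q"
    and "Eu C1 f = 1" "Eu C2 g = 1"
  shows "Eu (C1 \<union> C2) (lmin Q f g) = 1"
proof -
  have "C1 \<noteq> UNIV" "C2 \<noteq> UNIV" using assms(2) by auto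
  then obtain \<phi> \<psi> where "\<phi> \<in> \<Gamma>" "below \<phi> f" "E u C1 (val \<phi>) = 1"
    and "\<psi> \<in> \<Gamma>" "below \<psi> g" "E u C2 (val \<psi>) = 1"
    using Es_proper_eq_1_iff assms(3-6) by metis
  thus ?thesis
    using Es_proper_eq_1_iff[OF assms(2) lmin_lfun_1[OF assms(3,4)]] fwedge_in_Gamma
      below_fwedge E_u_fwedge_one[OF assms(1)] by blast
qed

text \<open>
  At the grand coalition a formula \<chi> below \<not>(f \<and> g) with E(u)(\<emptyset>,\<chi>) = 1 is refuted
  by conjoining it with the witnesses for f and g.
\<close>

lemma Es_superadditive_UNIV_empty:
  assumes f: "f \<in> lfun 1 Q" and g: "g \<in> lfun 1 Q"
    and "Eu UNIV f = 1" "Eu {} g = 1"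
  shows "Eu UNIV (lmin Q f g) = 1"
  unfolding Es_UNIV_eq_1_iff[OF lmin_lfun_1[OF f g]]
proof
  assume "\<exists>\<chi>\<in>\<Gamma>. below \<chi> (lneg Q (lmin Q f g)) \<and> E u {} (val \<chi>) = 1"
  then obtain \<chi> where \<chi>: "\<chi> \<in> \<Gamma>" "below \<chi> (lneg Q (lmin Q f g))" "E u {} (val \<chi>) = 1"
    by blast
  obtain \<psi> where \<psi>: "\<psi> \<in> \<Gamma>" "below \<psi> g" "E u {} (val \<psi>) = 1"
    using Es_proper_eq_1_iff[of "{}" g] g assms(4) by auto
  have "below (fwedge \<psi> \<chi>) (lneg Q f)" unfolding below_def
  proof
    fix v assume v: "v \<in> S"
    have "ev v \<psi> \<le> g (cl v)" "ev v \<chi> \<le> 1 - min (f (cl v)) (g (cl v))"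
      using \<chi>(2) \<psi>(2) v cl_in_Q[OF v] by (auto simp: below_def lneg_def lmin_def)
    then show "ev v (fwedge \<psi> \<chi>) \<le> lneg Q f (cl v)"
      using lfun_1_values[OF f cl_in_Q[OF v]] lfun_1_values[OF g cl_in_Q[OF v]]
        eval_bounds[OF v, of \<psi>] eval_bounds[OF v, of \<chi>] cl_in_Q[OF v]
      by (auto simp: ev_fwedge[OF v] lneg_def min_def)
  qed
  moreover have "E u {} (val (fwedge \<psi> \<chi>)) = 1"
    using E_u_fwedge_one[of "{}" "{}" \<psi> \<chi>] \<psi>(3) \<chi>(3) by simp
  ultimately have "\<exists>\<theta>\<in>\<Gamma>. below \<theta> (lneg Q f) \<and> E u {} (val \<theta>) = 1"
    using fwedge_in_Gamma[OF \<psi>(1) \<chi>(1)] by blast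
  then show False using Es_UNIV_eq_1_iff[OF f] assms(3) by simp
qed

lemma Es_superadditive_split:
  assumes "C1 \<inter> C2 = {}" "C1 \<union> C2 = UNIV" "C1 \<noteq> UNIV" "C2 \<noteq> UNIV"
    and f: "f \<in> lfun 1 Q" and g: "g \<in> lfun 1 Q" and "Eu C1 f = 1" "Eu C2 g = 1"
  shows "Eu UNIV (lmin Q f g) = 1"
  unfolding Es_UNIV_eq_1_iff[OF lmin_lfun_1[OF f g]]
proof
  assume "\<exists>\<chi>\<in>\<Gamma>. below \<chi> (lneg Q (lmin Q f g)) \<and> E u {} (val \<chi>) = 1"
  then obtain \<chi> where \<chi>: "below \<chi> (lneg Q (lmin Q f g))" "E u {} (val \<chi>) = 1" by blast
  obtain \<phi> \<psi> where \<phi>: "below \<phi> f" "E u C1 (val \<phi>) = 1" and \<psi>: "below \<psi> g" "E u C2 (val \<psi>) = 1"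
    using Es_proper_eq_1_iff assms(3-8) by metis
  let ?\<theta> = "fwedge (fwedge \<phi> \<psi>) \<chi>"
  have "E u UNIV (val ?\<theta>) = 1"
    using E_u_fwedge_one[OF assms(1) \<phi>(2) \<psi>(2)] E_u_fwedge_one[of UNIV "{}"] \<chi>(2) assms(2)
    by fastforce
  moreover have "val ?\<theta> = lconst S 0" unfolding lconst_def
  proof (rule restrict_ext)
    fix v assume v: "v \<in> S"
    have "ev v \<phi> \<le> f (cl v)" "ev v \<psi> \<le> g (cl v)" "ev v \<chi> \<le> 1 - min (f (cl v)) (g (cl v))"
      using \<phi>(1) \<psi>(1) \<chi>(1) v cl_in_Q[OF v] by (auto simp: below_def lneg_def lmin_def)
    then show "ev v ?\<theta> = 0"
      using lfun_1_values[OF f cl_in_Q[OF v]] lfun_1_values[OF g cl_in_Q[OF v]]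
        eval_bounds[OF v, of \<phi>] eval_bounds[OF v, of \<psi>] eval_bounds[OF v, of \<chi>]
      by (auto simp: ev_fwedge[OF v] min_def)
  qed
  ultimately show False using playable_E_u by (simp add: playable_def safety_def)
qed

lemma Es_superadditive: "superadditive 1 Q Eu"
  unfolding superadditive_def
proof (intro allI ballI impI)
  fix C1 C2 :: "'a set" and f g
  assume f: "f \<in> lfun 1 Q" and g: "g \<in> lfun 1 Q" and disjoint: "C1 \<inter> C2 = {}"
  have one: "Eu (C1 \<union> C2) (lmin Q f g) = 1" if "Eu C1 f = 1" "Eu C2 g = 1"
  proof -
    consider "C1 \<union> C2 \<noteq> UNIV" | "C1 = UNIV" | "C2 = UNIV"
      | "C1 \<union> C2 = UNIV" "C1 \<noteq> UNIV" "C2 \<noteq> UNIV" by blast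
    then show ?thesis
    proof cases
      case 1
      then show ?thesis using Es_superadditive_proper disjoint f g that by blast
    next
      case 2
      then have "C2 = {}" using disjoint by auto
      then show ?thesis using Es_superadditive_UNIV_empty f g that \<open>C1 = UNIV\<close> by simp
    next
      case 3
      then have "C1 = {}" using disjoint by auto
      then have "Eu UNIV (lmin Q g f) = 1"
        using Es_superadditive_UNIV_empty[OF g f] that \<open>C2 = UNIV\<close> by simp
      then show ?thesis using \<open>C1 = {}\<close> \<open>C2 = UNIV\<close> by (simp add: lmin_commute[of Q g f])
    next
      case 4
      then show ?thesis using Es_superadditive_split disjoint f g that by simp
    qed
  qed
  show "min (Eu C1 f) (Eu C2 g) \<le> Eu (C1 \<union> C2) (lmin Q f g)"
  proof (cases "Eu C1 f = 1 \<and> Eu C2 g = 1")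
    case True
    then show ?thesis using one by simp
  next
    case False
    then have "min (Eu C1 f) (Eu C2 g) = 0"
      using Es_Boolean[OF f, of C1] Es_Boolean[OF g, of C2] by auto
    moreover have "0 \<le> Eu (C1 \<union> C2) (lmin Q f g)"
      using Es_Boolean[OF lmin_lfun_1[OF f g], of "C1 \<union> C2"] by linarith
    ultimately show ?thesis by simp
  qed
qed

lemma playable_Es: "playable 1 Q Eu"
proof -
  have "eff_fun 1 Q Eu"
    unfolding eff_fun_def using Es_Boolean luk_1 by simp
  moreover have "N_maximal 1 Q Eu"
    unfolding N_maximal_def using Es_UNIV by simp
  ultimately show ?thesis unfolding playable_def
    using Es_outcome_monotonic Es_superadditive Es_homogeneous Es_liveness Es_safety by blast
qed

end

lemma mem_Cl_self: "\<mu> \<in> Cl \<mu>"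
  by (rule Cl.sub) (cases \<mu>; simp)

theorem mainTheorem8:
  fixes n :: nat
    and \<mu> :: "'a::finite form"
    and S :: "'s set"
    and E :: "'s \<Rightarrow> 'a set \<Rightarrow> ('s \<Rightarrow> real) \<Rightarrow> real"
    and V :: "'s \<Rightarrow> nat \<Rightarrow> real"
    and Es :: "'s set \<Rightarrow> 'a set \<Rightarrow> ('s set \<Rightarrow> real) \<Rightarrow> real"
    and Vs :: "'s set \<Rightarrow> nat \<Rightarrow> real"
  assumes "n \<ge> 1"
    and "card (UNIV :: 'a set) \<ge> 2"
    and "playable_model n S E V"
    and "intermediate_filtration n (Cl \<mu>) S E V Es Vs"
  shows "\<forall>u\<in>S. playable 1 (qstates (Cl \<mu>) S E V) (Es (cls (Cl \<mu>) S E V u))"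
proof
  fix u assume "u \<in> S"
  then interpret closed_intermediate_filtration n "Cl \<mu>" S E V Es Vs u
    by unfold_locales (use assms(1,4) mem_Cl_self[of \<mu>] Cl.neg Cl.imp in blast)+
  show "playable 1 (qstates (Cl \<mu>) S E V) (Es (cls (Cl \<mu>) S E V u))"
    using playable_Es .
qed

end
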